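(* Let $\alpha\ge0$, $0\le\beta<1$, and $f=h+\overline{g}\in\mathcal{W}_{\mathcal{H}}^0(\alpha,\beta)$. Then $s_{2,2}(f)(z)=z+a_2z^2+\overline{b_2z^2}$ is a convex harmonic mapping in the disk $|z|<\dfrac{1+\alpha}{4(1-\beta)}$.
   Context: Let $\mathbb{D}=\{z\in\mathbb{C}:|z|<1\}$. $\mathcal{H}^0$ denotes the class of harmonic maps $f=h+\overline{g}$ on $\mathbb{D}$, with $h,g$ analytic in $\mathbb{D}$, $h(z)=z+\sum_{n\ge2}a_nz^n$ and $g(z)=\sum_{n\ge2}b_nz^n$. For $\alpha\ge0$, $0\le\beta<1$, $\mathcal{W}_{\mathcal{H}}^0(\alpha,\beta)$ denotes the class of $f=h+\overline{g}\in\mathcal{H}^0$ such that $\Re\big(h'(z)+\alpha zh''(z)-\beta\big)>|g'(z)+\alpha zg''(z)|$ for all $z\in\mathbb{D}$. A harmonic map is convex in a disk if it is univalent there and maps the disk onto a convex domain. *)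

theory Defs
  imports "HOL-Analysis.Analysis"
begin

text \<open>Class H^0: f = h + conj g, h g analytic in the unit disk,
  h(z) = z + sum_{n>=2} a_n z^n, g(z) = sum_{n>=2} b_n z^n.\<close>
definition H0 :: "(complex \<Rightarrow> complex) \<Rightarrow> (complex \<Rightarrow> complex) \<Rightarrow> bool" where
  "H0 h g \<longleftrightarrow> h holomorphic_on ball 0 1 \<and> g holomorphic_on ball 0 1 \<and>
     h 0 = 0 \<and> deriv h 0 = 1 \<and> g 0 = 0 \<and> deriv g 0 = 0"

definition WH0 :: "real \<Rightarrow> real \<Rightarrow> (complex \<Rightarrow> complex) \<Rightarrow> (complex \<Rightarrow> complex) \<Rightarrow> bool" where
  "WH0 \<alpha> \<beta> h g \<longleftrightarrow> H0 h g \<and>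
     (\<forall>z \<in> ball 0 1.
        Re (deriv h z + of_real \<alpha> * z * (deriv ^^ 2) h z - of_real \<beta>)
          > cmod (deriv g z + of_real \<alpha> * z * (deriv ^^ 2) g z))"

definition taylor_coeff :: "(complex \<Rightarrow> complex) \<Rightarrow> nat \<Rightarrow> complex" where
  "taylor_coeff h n = (deriv ^^ n) h 0 / of_nat (fact n)"

definition convex_map_on :: "(complex \<Rightarrow> complex) \<Rightarrow> complex set \<Rightarrow> bool" where
  "convex_map_on F S \<longleftrightarrow> inj_on F S \<and> convex (F ` S)"

end

theory Submission
  imports Defs "HOL-Complex_Analysis.Complex_Analysis"
begin

text \<open>Applying Schwarz's lemma to the Cayley transform of
  \<open>h' + \<alpha> z h'' + \<epsilon> (g' + \<alpha> z g'') - \<beta>\<close>, which has positive real part, gives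
  \<open>(1 + \<alpha>) (|h''(0)| + |g''(0)|) \<le> 2 (1 - \<beta>)\<close> for a suitable unimodular \<open>\<epsilon>\<close>; so on the
  stated disc \<open>r (|a\<^sub>2| + |b\<^sub>2|) \<le> 1/4\<close>.  The quadratic harmonic polynomial
  \<open>F z = z + a z\<^sup>2 + cnj (b z\<^sup>2)\<close> is then injective on \<open>|z| < r\<close> by a direct estimate of
  \<open>F z\<^sub>1 - F z\<^sub>2\<close>.  For convexity, the whole image of the closed disc \<open>|z| \<le> \<rho>\<close> (\<open>\<rho> < r\<close>)
  lies on the inner side of the tangent line to the image of the circle \<open>|z| = \<rho>\<close> at each of
  its points, hence so does any convex combination \<open>w\<close> of two image points; then the field
  \<open>F - w\<close>, suitably rescaled, points weakly outward on the circle and by Brouwer's theorem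
  vanishes somewhere in the disc.\<close>

lemma caratheodory_deriv_bound:
  fixes Q :: "complex \<Rightarrow> complex" and c :: real
  assumes holQ: "Q holomorphic_on ball 0 1"
    and pos: "\<And>z. z \<in> ball 0 1 \<Longrightarrow> Re (Q z) > 0"
    and Q0: "Q 0 = of_real c"
  shows "cmod (deriv Q 0) \<le> 2 * c"
proof -
  have c0: "c > 0" using pos[of 0] Q0 by simp
  have Qc: "Q z + of_real c \<noteq> 0" if "z \<in> ball 0 1" for z
    using pos[OF that] c0 by (auto simp: complex_eq_iff)
  define w where "w z = (Q z - of_real c) / (Q z + of_real c)" for z
  have holw: "w holomorphic_on ball 0 1"
    unfolding w_def using holQ Qc by (intro holomorphic_intros) auto
  have w_lt_1: "cmod (w z) < 1" if "cmod z < 1" for z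
  proof -
    have "(cmod (Q z - of_real c))\<^sup>2 < (cmod (Q z + of_real c))\<^sup>2"
      using pos[of z] that c0 unfolding cmod_power2 by (simp add: power2_eq_square algebra_simps)
    hence "cmod (Q z - of_real c) < cmod (Q z + of_real c)"
      by (meson norm_ge_zero power_less_imp_less_base)
    thus ?thesis using Qc[of z] that by (simp add: w_def norm_divide divide_less_eq)
  qed
  have w0: "w 0 = 0"
    by (simp add: w_def Q0)
  have dQ: "(Q has_field_derivative deriv Q 0) (at 0)"
    using holomorphic_derivI[OF holQ] by simp
  have "(w has_field_derivative
          (deriv Q 0 * (Q 0 + of_real c) - (Q 0 - of_real c) * deriv Q 0)
            / ((Q 0 + of_real c) * (Q 0 + of_real c))) (at 0)"
    unfolding w_def[abs_def]
    by (rule DERIV_divide) (use DERIV_diff[OF dQ DERIV_const] DERIV_add[OF dQ DERIV_const] Qc[of 0] in auto)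
  hence "deriv w 0 = deriv Q 0 / (2 * of_real c)"
    using c0 by (simp add: DERIV_imp_deriv Q0 field_simps)
  moreover have "cmod (deriv w 0) \<le> 1"
    using Schwarz_Lemma(2)[OF holw w0 w_lt_1, of 0] by simp
  ultimately show ?thesis using c0 by (simp add: norm_divide divide_le_eq)
qed

lemma has_field_derivative_deriv_add_mult_deriv2_at_0:
  fixes \<phi> :: "complex \<Rightarrow> complex"
  assumes "\<phi> holomorphic_on S" and "open S" and "0 \<in> S"
  shows "((\<lambda>z. deriv \<phi> z + c * z * deriv (deriv \<phi>) z)
           has_field_derivative (1 + c) * deriv (deriv \<phi>) 0) (at 0)"
proof -
  have hol1: "deriv \<phi> holomorphic_on S" and hol2: "deriv (deriv \<phi>) holomorphic_on S"
    using assms by (auto intro!: holomorphic_deriv)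
  have "((\<lambda>z. deriv \<phi> z + c * z * deriv (deriv \<phi>) z) has_field_derivative
          deriv (deriv \<phi>) 0 + (c * 1 * deriv (deriv \<phi>) 0 + deriv (deriv (deriv \<phi>)) 0 * (c * 0))) (at 0)"
    by (intro DERIV_add DERIV_mult DERIV_cmult DERIV_ident
          holomorphic_derivI[OF hol1 assms(2,3)] holomorphic_derivI[OF hol2 assms(2,3)])
  thus ?thesis by (simp add: algebra_simps)
qed

lemma WH0_second_coeff_bound:
  fixes h g :: "complex \<Rightarrow> complex" and \<epsilon> :: complex
  assumes "WH0 \<alpha> \<beta> h g" and "cmod \<epsilon> \<le> 1"
  shows "cmod ((1 + of_real \<alpha>) * ((deriv ^^ 2) h 0 + \<epsilon> * (deriv ^^ 2) g 0)) \<le> 2 * (1 - \<beta>)"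
proof -
  have holh: "h holomorphic_on ball 0 1" and holg: "g holomorphic_on ball 0 1"
    and h'0: "deriv h 0 = 1" and g'0: "deriv g 0 = 0"
    using assms(1) by (auto simp: WH0_def H0_def)
  have deriv2: "(deriv ^^ 2) f = deriv (deriv f)" for f :: "complex \<Rightarrow> complex"
    by (simp add: numeral_2_eq_2)
  define P :: "(complex \<Rightarrow> complex) \<Rightarrow> complex \<Rightarrow> complex"
    where "P \<phi> z = deriv \<phi> z + of_real \<alpha> * z * deriv (deriv \<phi>) z" for \<phi> z
  define Q where "Q z = P h z + \<epsilon> * P g z - of_real \<beta>" for z
  have holP: "P \<phi> holomorphic_on ball 0 1" if "\<phi> holomorphic_on ball 0 1" for \<phi>
    unfolding P_def using that by (intro holomorphic_intros holomorphic_deriv) auto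
  have "Q holomorphic_on ball 0 1"
    unfolding Q_def using holP[OF holh] holP[OF holg] by (intro holomorphic_intros) auto
  moreover have "Re (Q z) > 0" if "z \<in> ball 0 1" for z
  proof -
    have "Re (P h z - of_real \<beta>) > cmod (P g z)"
      using assms(1) that by (simp add: WH0_def P_def deriv2)
    moreover have "- Re (\<epsilon> * P g z) \<le> cmod (\<epsilon> * P g z)"
      using abs_Re_le_cmod[of "\<epsilon> * P g z"] by linarith
    moreover have "cmod (\<epsilon> * P g z) \<le> cmod (P g z)"
      using assms(2) by (simp add: norm_mult mult_left_le_one_le)
    ultimately show ?thesis by (simp add: Q_def)
  qed
  moreover have "Q 0 = of_real (1 - \<beta>)"
    by (simp add: Q_def P_def h'0 g'0)
  ultimately have "cmod (deriv Q 0) \<le> 2 * (1 - \<beta>)"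
    by (rule caratheodory_deriv_bound)
  moreover have "(Q has_field_derivative
      (1 + of_real \<alpha>) * ((deriv ^^ 2) h 0 + \<epsilon> * (deriv ^^ 2) g 0)) (at 0)"
  proof -
    have "(Q has_field_derivative (1 + of_real \<alpha>) * deriv (deriv h) 0
            + \<epsilon> * ((1 + of_real \<alpha>) * deriv (deriv g) 0) - 0) (at 0)"
      unfolding Q_def[abs_def] P_def
      by (intro DERIV_diff DERIV_add DERIV_cmult DERIV_const
          has_field_derivative_deriv_add_mult_deriv2_at_0[OF holh]
          has_field_derivative_deriv_add_mult_deriv2_at_0[OF holg]) auto
    thus ?thesis by (simp add: deriv2 algebra_simps)
  qed
  ultimately show ?thesis by (simp add: DERIV_imp_deriv)
qed

lemma exists_unimodular_norm_add_eq:
  fixes A B :: complex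
  shows "\<exists>\<epsilon>. cmod \<epsilon> \<le> 1 \<and> cmod (A + \<epsilon> * B) = cmod A + cmod B"
proof -
  define u where "u = (if A = 0 then 1 else sgn A)"
  have u: "cmod u = 1"
    by (simp add: u_def norm_sgn)
  have A: "A = u * of_real (cmod A)"
    by (simp add: u_def sgn_div_norm scaleR_conv_of_real)
  have B: "cnj (sgn B) * B = of_real (cmod B)"
    by (cases "B = 0")
      (simp_all add: sgn_div_norm scaleR_conv_of_real power2_eq_square field_simps flip: complex_norm_square)
  have "A + u * cnj (sgn B) * B = u * (of_real (cmod A) + cnj (sgn B) * B)"
    by (subst A) (simp add: algebra_simps)
  also have "\<dots> = u * of_real (cmod A + cmod B)"
    by (simp add: B)
  finally have "A + u * cnj (sgn B) * B = u * of_real (cmod A + cmod B)" .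
  hence "cmod (A + u * cnj (sgn B) * B) = cmod A + cmod B"
    by (simp add: norm_mult u flip: of_real_add)
  moreover have "cmod (u * cnj (sgn B)) \<le> 1"
    by (simp add: norm_mult u norm_sgn)
  ultimately show ?thesis by (metis mult.assoc)
qed

lemma WH0_second_coeff_sum_bound:
  fixes h g :: "complex \<Rightarrow> complex"
  assumes "\<alpha> \<ge> 0" and "WH0 \<alpha> \<beta> h g"
  shows "(1 + \<alpha>) * (cmod ((deriv ^^ 2) h 0) + cmod ((deriv ^^ 2) g 0)) \<le> 2 * (1 - \<beta>)"
proof -
  obtain \<epsilon> where \<epsilon>: "cmod \<epsilon> \<le> 1"
    "cmod ((deriv ^^ 2) h 0 + \<epsilon> * (deriv ^^ 2) g 0) = cmod ((deriv ^^ 2) h 0) + cmod ((deriv ^^ 2) g 0)"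
    using exists_unimodular_norm_add_eq by blast
  have "cmod (1 + complex_of_real \<alpha>) = 1 + \<alpha>"
    using assms(1) by (metis of_real_1 of_real_add norm_of_real abs_of_nonneg add_nonneg_nonneg zero_le_one)
  thus ?thesis using WH0_second_coeff_bound[OF assms(2) \<epsilon>(1)] by (simp add: norm_mult \<epsilon>(2))
qed

definition quad_harmonic :: "complex \<Rightarrow> complex \<Rightarrow> complex \<Rightarrow> complex" where
  "quad_harmonic a b z = z + a * z\<^sup>2 + cnj (b * z\<^sup>2)"

text \<open>The conjugate of \<open>z \<partial>F/\<partial>z - cnj z \<partial>F/\<partial>(cnj z)\<close> for \<open>F = quad_harmonic a b\<close>: an outward
  normal to the image of the circle \<open>|\<zeta>| = |z|\<close> at \<open>F z\<close>, paired with a vector \<open>v\<close> via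
  \<open>Re (quad_normal a b z * v)\<close>.\<close>
definition quad_normal :: "complex \<Rightarrow> complex \<Rightarrow> complex \<Rightarrow> complex" where
  "quad_normal a b z = cnj z + 2 * cnj a * (cnj z)\<^sup>2 - 2 * b * z\<^sup>2"

lemma inj_on_quad_harmonic_ball:
  assumes "r * (cmod a + cmod b) \<le> 1/4"
  shows "inj_on (quad_harmonic a b) (ball 0 r)"
proof (rule inj_onI)
  fix z1 z2 assume z1: "z1 \<in> ball 0 r" and z2: "z2 \<in> ball 0 r"
    and eq: "quad_harmonic a b z1 = quad_harmonic a b z2"
  define d where "d = z1 - z2"
  have "d = - (a * ((z1 + z2) * d) + cnj (b * ((z1 + z2) * d)))"
    using eq unfolding quad_harmonic_def d_def
    by (simp add: power2_eq_square algebra_simps complex_eq_iff)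
  hence "cmod d \<le> cmod a * (cmod (z1 + z2) * cmod d) + cmod b * (cmod (z1 + z2) * cmod d)"
    by (metis norm_minus_cancel norm_triangle_le norm_mult complex_mod_cnj order_refl add_mono)
  hence le: "cmod d \<le> ((cmod a + cmod b) * cmod (z1 + z2)) * cmod d"
    by (simp add: algebra_simps)
  have "cmod (z1 + z2) < 2 * r"
    using norm_triangle_ineq[of z1 z2] z1 z2 by simp
  hence "(cmod a + cmod b) * cmod (z1 + z2) \<le> (cmod a + cmod b) * (2 * r)"
    by (intro mult_left_mono) auto
  also have "\<dots> \<le> 1/2"
    using assms by (simp add: algebra_simps)
  finally have "((cmod a + cmod b) * cmod (z1 + z2)) * cmod d \<le> 1/2 * cmod d"
    by (intro mult_right_mono) auto
  with le have "cmod d \<le> 0"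
    by linarith
  thus "z1 = z2"
    unfolding d_def by simp
qed

text \<open>In the normalisation \<open>x = a z\<close>, \<open>y = b z\<^sup>2 / cnj z\<close>, \<open>v = \<zeta> / z\<close> the expression
  \<open>Re (quad_normal a b z * (quad_harmonic a b \<zeta> - quad_harmonic a b z))\<close> becomes \<open>|z|\<^sup>2\<close>
  times the left-hand side below.\<close>
lemma re_normalized_support_eq:
  fixes x y v :: complex
  shows "Re ((1 + 2 * cnj x - 2 * y) * ((v - 1) + x * (v\<^sup>2 - 1) + cnj (y * (v\<^sup>2 - 1))))
    = (1 + 4 * Re x + 4 * (cmod x)\<^sup>2 - 4 * (cmod y)\<^sup>2) * Re (v - 1)
      + Re ((x + y + of_real (2 * (cmod x)\<^sup>2 - 2 * (cmod y)\<^sup>2)) * (v - 1)\<^sup>2)"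
  by (simp only: cmod_power2) (simp add: power2_eq_square algebra_simps)

lemma norm_normalized_support_coeff_le:
  fixes x y :: complex
  assumes "cmod x + cmod y \<le> 1/4"
  shows "cmod (x + y + of_real (2 * (cmod x)\<^sup>2 - 2 * (cmod y)\<^sup>2))
     \<le> (1 + 4 * Re x + 4 * (cmod x)\<^sup>2 - 4 * (cmod y)\<^sup>2) / 2"
proof -
  define s where "s = cmod x"
  define t where "t = cmod y"
  have s0: "s \<ge> 0" and t0: "t \<ge> 0"
    by (simp_all add: s_def t_def)
  have t14: "t \<le> 1/4 - s"
    using assms by (simp add: s_def t_def)
  hence s14: "s \<le> 1/4"
    using t0 by linarith
  have Rex: "Re x \<ge> -s"
    using abs_Re_le_cmod[of x] s_def by linarith
  have "s * (1 - 2 * s) \<ge> 0" and "s * (1 - 3 * s) \<ge> 0"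
    using s0 s14 by (auto intro!: mult_nonneg_nonneg)
  hence bound_nonneg: "2 * Re x + 3 * s - 2 * s\<^sup>2 \<ge> 0" and P: "Re x + 2 * s - 3 * s\<^sup>2 \<ge> 0"
    using Rex by (simp_all add: power2_eq_square algebra_simps)
  have "(cmod (x + of_real (2 * s\<^sup>2)))\<^sup>2 = (Re x + 2 * s\<^sup>2)\<^sup>2 + (Im x)\<^sup>2"
    by (simp add: cmod_power2)
  also have "\<dots> = (2 * Re x + 3 * s - 2 * s\<^sup>2)\<^sup>2 - 4 * (Re x + s) * (Re x + 2 * s - 3 * s\<^sup>2)"
    using cmod_power2[of x] by (simp add: s_def power2_eq_square algebra_simps)
  also have "\<dots> \<le> (2 * Re x + 3 * s - 2 * s\<^sup>2)\<^sup>2"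
    using Rex P by simp
  finally have A: "cmod (x + of_real (2 * s\<^sup>2)) \<le> 2 * Re x + 3 * s - 2 * s\<^sup>2"
    using bound_nonneg power2_le_imp_le by blast
  have B: "cmod (y - of_real (2 * t\<^sup>2)) \<le> t + 2 * t\<^sup>2"
    using norm_triangle_ineq4[of y "of_real (2 * t\<^sup>2)"] by (simp add: t_def norm_power)
  have "x + y + of_real (2 * (cmod x)\<^sup>2 - 2 * (cmod y)\<^sup>2)
      = (x + of_real (2 * s\<^sup>2)) + (y - of_real (2 * t\<^sup>2))"
    by (simp add: s_def t_def)
  hence "cmod (x + y + of_real (2 * (cmod x)\<^sup>2 - 2 * (cmod y)\<^sup>2))
      \<le> cmod (x + of_real (2 * s\<^sup>2)) + cmod (y - of_real (2 * t\<^sup>2))"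
    by (metis norm_triangle_ineq)
  also have "\<dots> \<le> 2 * Re x + 3 * s - 2 * s\<^sup>2 + t + 2 * t\<^sup>2"
    using A B by linarith
  also have "\<dots> \<le> (1 + 4 * Re x + 4 * s\<^sup>2 - 4 * t\<^sup>2) / 2"
  proof -
    have "t * t \<le> (1/4 - s) * (1/4 - s)"
      using t14 t0 by (intro mult_mono) auto
    thus ?thesis using t14 by (simp add: power2_eq_square algebra_simps)
  qed
  finally show ?thesis by (simp add: s_def t_def)
qed

lemma re_normalized_support_nonpos:
  fixes x y v :: complex
  assumes "cmod x + cmod y \<le> 1/4" and "cmod v \<le> 1"
  shows "Re ((1 + 2 * cnj x - 2 * y) * ((v - 1) + x * (v\<^sup>2 - 1) + cnj (y * (v\<^sup>2 - 1)))) \<le> 0"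
proof -
  define R where "R = 1 + 4 * Re x + 4 * (cmod x)\<^sup>2 - 4 * (cmod y)\<^sup>2"
  define c where "c = x + y + of_real (2 * (cmod x)\<^sup>2 - 2 * (cmod y)\<^sup>2)"
  define u where "u = v - 1"
  have c: "cmod c \<le> R / 2"
    using norm_normalized_support_coeff_le[OF assms(1)] unfolding R_def c_def .
  hence R0: "R \<ge> 0"
    using norm_ge_zero[of c] by linarith
  have "(cmod (u + 1))\<^sup>2 \<le> 1"
    using assms(2) by (simp add: u_def power_le_one)
  hence Reu: "Re u \<le> - ((cmod u)\<^sup>2 / 2)"
    unfolding cmod_power2 by (simp add: power2_eq_square field_simps)
  have "Re (c * u\<^sup>2) \<le> cmod c * (cmod u)\<^sup>2"
    using complex_Re_le_cmod[of "c * u\<^sup>2"] by (simp add: norm_mult norm_power)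
  also have "\<dots> \<le> R / 2 * (cmod u)\<^sup>2"
    using c by (intro mult_right_mono) auto
  finally have "Re (c * u\<^sup>2) \<le> R / 2 * (cmod u)\<^sup>2" .
  moreover have "R * Re u \<le> R * (- ((cmod u)\<^sup>2 / 2))"
    using R0 Reu by (intro mult_left_mono) auto
  ultimately have "R * Re u + Re (c * u\<^sup>2) \<le> 0"
    by simp
  thus ?thesis
    using re_normalized_support_eq[of x y v] unfolding R_def c_def u_def by simp
qed

lemma quad_harmonic_support:
  assumes "cmod z * (cmod a + cmod b) \<le> 1/4" and "cmod \<zeta> \<le> cmod z"
  shows "Re (quad_normal a b z * (quad_harmonic a b \<zeta> - quad_harmonic a b z)) \<le> 0"
proof (cases "z = 0")
  case True
  thus ?thesis using assms(2) by (simp add: quad_harmonic_def)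
next
  case False
  define x where "x = a * z"
  define y where "y = b * z\<^sup>2 / cnj z"
  define v where "v = \<zeta> / z"
  have cz: "cnj z \<noteq> 0" using False by simp
  have "cmod x + cmod y \<le> 1/4"
    using assms(1) False
    by (simp add: x_def y_def norm_mult norm_divide norm_power power2_eq_square algebra_simps)
  moreover have "cmod v \<le> 1"
    using assms(2) False by (simp add: v_def norm_divide divide_le_eq_1)
  ultimately have E: "Re ((1 + 2 * cnj x - 2 * y) * ((v - 1) + x * (v\<^sup>2 - 1) + cnj (y * (v\<^sup>2 - 1)))) \<le> 0"
    by (rule re_normalized_support_nonpos)
  have diff: "quad_harmonic a b \<zeta> - quad_harmonic a b z
      = z * ((v - 1) + x * (v\<^sup>2 - 1) + cnj (y * (v\<^sup>2 - 1)))"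
    and normal: "quad_normal a b z = cnj z * (1 + 2 * cnj x - 2 * y)"
    unfolding quad_harmonic_def quad_normal_def v_def x_def y_def using False cz
    by (simp_all add: field_simps power2_eq_square)
  have "quad_normal a b z * (quad_harmonic a b \<zeta> - quad_harmonic a b z)
      = (cnj z * z) * ((1 + 2 * cnj x - 2 * y) * ((v - 1) + x * (v\<^sup>2 - 1) + cnj (y * (v\<^sup>2 - 1))))"
    unfolding diff normal by (simp add: algebra_simps)
  also have "cnj z * z = of_real ((cmod z)\<^sup>2)"
    by (simp only: complex_norm_square mult.commute)
  finally show ?thesis
    using E by (simp add: mult_nonneg_nonpos)
qed

lemma outward_field_has_zero:
  fixes \<Psi> :: "complex \<Rightarrow> complex"
  assumes "\<rho> > 0" and "continuous_on (cball 0 \<rho>) \<Psi>"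
    and outward: "\<And>z. cmod z = \<rho> \<Longrightarrow> Re (cnj z * \<Psi> z) \<ge> 0"
  shows "\<exists>z\<in>cball 0 \<rho>. \<Psi> z = 0"
proof (rule ccontr)
  assume "\<not> ?thesis"
  hence nz: "\<And>z. z \<in> cball 0 \<rho> \<Longrightarrow> \<Psi> z \<noteq> 0" by blast
  txt \<open>A fixed point of \<open>T\<close> lies on the circle and is where \<open>\<Psi>\<close> points strictly inward.\<close>
  define T where "T z = - of_real \<rho> * \<Psi> z / of_real (cmod (\<Psi> z))" for z
  have norm_T: "cmod (T z) = \<rho>" if "z \<in> cball 0 \<rho>" for z
    using nz[OF that] assms(1) by (simp add: T_def norm_mult norm_divide)
  have "continuous_on (cball 0 \<rho>) T"
    unfolding T_def using nz by (intro continuous_intros assms(2)) auto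
  moreover have "T \<in> cball 0 \<rho> \<rightarrow> cball 0 \<rho>"
    using norm_T by auto
  ultimately obtain z where z: "z \<in> cball 0 \<rho>" "T z = z"
    by (rule brouwer_ball[OF assms(1)])
  have "cnj z * \<Psi> z = - of_real \<rho> * (cnj (\<Psi> z) * \<Psi> z) / of_real (cmod (\<Psi> z))"
    by (subst z(2)[symmetric]) (simp add: T_def)
  also have "cnj (\<Psi> z) * \<Psi> z = of_real ((cmod (\<Psi> z))\<^sup>2)"
    by (simp only: complex_norm_square mult.commute)
  finally have "cnj z * \<Psi> z = - of_real (\<rho> * cmod (\<Psi> z))"
    using nz[OF z(1)] by (simp add: power2_eq_square)
  hence "Re (cnj z * \<Psi> z) < 0"
    using nz[OF z(1)] assms(1) by simp
  moreover have "cmod z = \<rho>"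
    using norm_T[OF z(1)] z(2) by simp
  ultimately show False
    using outward by fastforce
qed

lemma quad_harmonic_attains_if_normal_nonneg:
  assumes "\<rho> > 0" and "\<rho> * (cmod a + cmod b) \<le> 1/4"
    and normal: "\<And>z. cmod z = \<rho> \<Longrightarrow> Re (quad_normal a b z * (quad_harmonic a b z - w)) \<ge> 0"
  shows "w \<in> quad_harmonic a b ` cball 0 \<rho>"
proof -
  txt \<open>On the circle \<open>|z| = \<rho>\<close> we have \<open>cnj z * \<mu> z = quad_normal a b z\<close>, while on the disc
    \<open>\<mu>\<close> stays within \<open>1/2\<close> of \<open>1\<close>; so a zero of \<open>\<Psi>\<close> is a preimage of \<open>w\<close>.\<close>
  define \<mu> where "\<mu> z = 1 + 2 * cnj (a * z) - 2 * b * z ^ 3 / of_real (\<rho>\<^sup>2)" for z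
  define \<Psi> where "\<Psi> z = (quad_harmonic a b z - w) * \<mu> z" for z
  have "continuous_on (cball 0 \<rho>) \<Psi>"
    unfolding \<Psi>_def \<mu>_def quad_harmonic_def using assms(1) by (intro continuous_intros) auto
  moreover have "Re (cnj z * \<Psi> z) \<ge> 0" if z: "cmod z = \<rho>" for z
  proof -
    have "z * cnj z = of_real (\<rho>\<^sup>2)"
      using z complex_norm_square[of z] by simp
    hence "cnj z * \<mu> z = quad_normal a b z"
      using assms(1)
      by (simp add: \<mu>_def quad_normal_def power2_eq_square power3_eq_cube field_simps)
    hence "cnj z * \<Psi> z = quad_normal a b z * (quad_harmonic a b z - w)"
      by (simp add: \<Psi>_def algebra_simps)
    thus ?thesis
      using normal[OF z] by simp
  qed
  ultimately obtain z where z: "z \<in> cball 0 \<rho>" "\<Psi> z = 0"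
    using outward_field_has_zero[OF assms(1)] by blast
  have "cmod (\<mu> z - 1) \<le> 2 * (cmod a * cmod z) + 2 * (cmod b * (cmod z ^ 3 / \<rho>\<^sup>2))"
    using norm_triangle_ineq4[of "2 * cnj (a * z)" "2 * b * z ^ 3 / of_real (\<rho>\<^sup>2)"]
    by (simp add: \<mu>_def norm_mult norm_divide norm_power)
  also have "\<dots> \<le> 2 * (cmod a * \<rho>) + 2 * (cmod b * \<rho>)"
  proof -
    have "cmod z ^ 3 \<le> \<rho> ^ 3"
      using z(1) by (intro power_mono) auto
    hence "cmod z ^ 3 / \<rho>\<^sup>2 \<le> \<rho>"
      using assms(1) by (simp add: divide_le_eq power2_eq_square power3_eq_cube)
    thus ?thesis
      using z(1) by (intro add_mono mult_left_mono) auto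
  qed
  also have "\<dots> \<le> 1/2"
    using assms(2) by (simp add: algebra_simps)
  finally have "\<mu> z \<noteq> 0"
    by auto
  hence "quad_harmonic a b z = w"
    using z(2) by (simp add: \<Psi>_def)
  thus ?thesis
    using z(1) by blast
qed

lemma convex_quad_harmonic_image_cball:
  assumes "\<rho> * (cmod a + cmod b) \<le> 1/4"
  shows "convex (quad_harmonic a b ` cball 0 \<rho>)"
proof (cases "\<rho> > 0")
  case False
  hence "cball (0::complex) \<rho> = {} \<or> cball (0::complex) \<rho> = {0}"
    by (cases "\<rho> = 0") auto
  thus ?thesis
    by (metis convex_empty convex_singleton image_empty image_insert)
next
  case True
  show ?thesis
  proof (rule convexI)
    fix p q :: complex and u v :: real
    assume p: "p \<in> quad_harmonic a b ` cball 0 \<rho>" and q: "q \<in> quad_harmonic a b ` cball 0 \<rho>"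
      and u: "0 \<le> u" and v: "0 \<le> v" and uv: "u + v = 1"
    obtain z1 z2 where z1: "z1 \<in> cball 0 \<rho>" "p = quad_harmonic a b z1"
      and z2: "z2 \<in> cball 0 \<rho>" "q = quad_harmonic a b z2"
      using p q by blast
    show "u *\<^sub>R p + v *\<^sub>R q \<in> quad_harmonic a b ` cball 0 \<rho>"
    proof (rule quad_harmonic_attains_if_normal_nonneg[OF True assms])
      fix z :: complex assume z: "cmod z = \<rho>"
      let ?F = "quad_harmonic a b" and ?n = "quad_normal a b z"
      have "?F z - (u *\<^sub>R p + v *\<^sub>R q) = (u + v) *\<^sub>R ?F z - (u *\<^sub>R p + v *\<^sub>R q)"
        using uv by simp
      also have "\<dots> = - (u *\<^sub>R (?F z1 - ?F z)) - v *\<^sub>R (?F z2 - ?F z)"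
        using z1(2) z2(2) by (simp add: scaleR_add_left scaleR_diff_right)
      finally have "Re (?n * (?F z - (u *\<^sub>R p + v *\<^sub>R q)))
          = - (u * Re (?n * (?F z1 - ?F z))) - v * Re (?n * (?F z2 - ?F z))"
        by (simp add: scaleR_conv_of_real ring_distribs)
      moreover have support1: "Re (?n * (?F z1 - ?F z)) \<le> 0"
        by (rule quad_harmonic_support) (use z z1(1) assms in auto)
      moreover have support2: "Re (?n * (?F z2 - ?F z)) \<le> 0"
        by (rule quad_harmonic_support) (use z z2(1) assms in auto)
      ultimately show "Re (?n * (?F z - (u *\<^sub>R p + v *\<^sub>R q))) \<ge> 0"
        using mult_nonneg_nonpos[OF u support1] mult_nonneg_nonpos[OF v support2] by linarith
    qed
  qed
qed

lemma convex_quad_harmonic_image_ball: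
  assumes "r * (cmod a + cmod b) \<le> 1/4"
  shows "convex (quad_harmonic a b ` ball 0 r)"
proof (rule convexI)
  fix p q :: complex and u v :: real
  assume "p \<in> quad_harmonic a b ` ball 0 r" and "q \<in> quad_harmonic a b ` ball 0 r"
    and uv: "0 \<le> u" "0 \<le> v" "u + v = 1"
  then obtain z1 z2 where z1: "z1 \<in> ball 0 r" "p = quad_harmonic a b z1"
    and z2: "z2 \<in> ball 0 r" "q = quad_harmonic a b z2"
    by blast
  define \<rho> where "\<rho> = max (cmod z1) (cmod z2)"
  have \<rho>: "\<rho> < r" "0 \<le> \<rho>"
    using z1 z2 by (auto simp: \<rho>_def le_max_iff_disj)
  have "\<rho> * (cmod a + cmod b) \<le> 1/4"
    using assms \<rho> by (meson order_trans less_imp_le mult_right_mono add_nonneg_nonneg norm_ge_zero)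
  moreover have "p \<in> quad_harmonic a b ` cball 0 \<rho>" and "q \<in> quad_harmonic a b ` cball 0 \<rho>"
    using z1 z2 by (auto simp: \<rho>_def)
  ultimately have "u *\<^sub>R p + v *\<^sub>R q \<in> quad_harmonic a b ` cball 0 \<rho>"
    using convex_quad_harmonic_image_cball uv by (blast dest: convexD)
  moreover have "cball 0 \<rho> \<subseteq> ball (0::complex) r"
    using \<rho> by auto
  ultimately show "u *\<^sub>R p + v *\<^sub>R q \<in> quad_harmonic a b ` ball 0 r"
    by blast
qed

theorem theorem5p3:
  fixes h g :: "complex \<Rightarrow> complex" and \<alpha> \<beta> :: real
  assumes "\<alpha> \<ge> 0" and "0 \<le> \<beta>" and "\<beta> < 1"
    and "WH0 \<alpha> \<beta> h g"
  shows "convex_map_on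
           (\<lambda>z. z + taylor_coeff h 2 * z ^ 2 + cnj (taylor_coeff g 2 * z ^ 2))
           (ball 0 ((1 + \<alpha>) / (4 * (1 - \<beta>))))"
proof -
  define r where "r = (1 + \<alpha>) / (4 * (1 - \<beta>))"
  have coeffs: "cmod (taylor_coeff h 2) + cmod (taylor_coeff g 2)
      = (cmod ((deriv ^^ 2) h 0) + cmod ((deriv ^^ 2) g 0)) / 2"
    by (simp add: taylor_coeff_def norm_divide)
  have "r * (cmod (taylor_coeff h 2) + cmod (taylor_coeff g 2))
      = (1 + \<alpha>) * (cmod ((deriv ^^ 2) h 0) + cmod ((deriv ^^ 2) g 0)) / (8 * (1 - \<beta>))"
    unfolding r_def coeffs by simp
  also have "\<dots> \<le> 2 * (1 - \<beta>) / (8 * (1 - \<beta>))"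
    using WH0_second_coeff_sum_bound[OF assms(1,4)] assms(3) by (intro divide_right_mono) auto
  also have "\<dots> = 1/4"
    using assms(3) by simp
  finally have "r * (cmod (taylor_coeff h 2) + cmod (taylor_coeff g 2)) \<le> 1/4" .
  thus ?thesis
    using inj_on_quad_harmonic_ball convex_quad_harmonic_image_ball
    by (simp add: convex_map_on_def r_def quad_harmonic_def[abs_def])
qed

end
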